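(* Let $(x_0^*,x^*,y^* )$ be a basic optimal solution to Problem (II) defined in the context, and let $S^*=\{i\in\mathcal N:x_i^*\ne0\}$. Then $S^*$ is an optimal solution to Problem (I) defined in the context.
   Context: Let $\mathcal N=\{1,\dots,N\}$, $\mathcal K=\{1,\dots,K\}$. Data: $\hat v_i>0$, $r_i\in[0,1]$, $a(i,k)\in[0,1]$, multipliers $\mu_k\ge0$, and $\varepsilon_i=(\sqrt N+1)\Psi/\sqrt{n_i}$ with positive integers $n_i$ and a constant $\Psi>0$. Problem (I): maximize over $S\subseteq\mathcal N$ the quantity $\sum_{i\in S}\Big[r_i\Big(\frac{\hat v_i}{1+\sum_{j\in S}\hat v_j}+\varepsilon_i\Big)-\sum_{k\in\mathcal K}a(i,k)\mu_k\Big(\frac{\hat v_i}{1+\sum_{j\in S}\hat v_j}-\varepsilon_i\Big)\Big]$. Problem (II): maximize over $(x_0,x,y)\in\mathbb R\times\mathbb R_+^N\times\mathbb R_+^{N\times N}$ the quantity $\sum_{i\in\mathcal N}\Big[r_i\Big((\hat v_i+\varepsilon_i)x_i+\varepsilon_i\sum_{j\in\mathcal N}\hat v_jy_{ij}\Big)-\sum_{k\in\mathcal K}a(i,k)\mu_k\Big((\hat v_i-\varepsilon_i)x_i-\varepsilon_i\sum_{j\in\mathcal N}\hat v_jy_{ij}\Big)\Big]$ subject to $x_0+\sum_i\hat v_ix_i=1$, $x_i\le x_0$ for all $i$, and $y_{ij}\le x_i$, $y_{ij}\le x_j$ for all $i,j$. *)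

theory Defs
  imports Complex_Main
begin

text \<open>Index sets are {1..N} (products) and {1..K} (constraints).
  Data: vh i = hat v_i, r i, a i k, mu k, n i (positive integers), Psi.\<close>

definition eps :: "nat \<Rightarrow> real \<Rightarrow> (nat \<Rightarrow> nat) \<Rightarrow> nat \<Rightarrow> real" where
  "eps N Psi n i = (sqrt (real N) + 1) * Psi / sqrt (real (n i))"

definition objI ::
  "nat \<Rightarrow> nat \<Rightarrow> (nat \<Rightarrow> real) \<Rightarrow> (nat \<Rightarrow> real) \<Rightarrow> (nat \<Rightarrow> nat \<Rightarrow> real)
   \<Rightarrow> (nat \<Rightarrow> real) \<Rightarrow> (nat \<Rightarrow> nat) \<Rightarrow> real \<Rightarrow> nat set \<Rightarrow> real" where
  "objI N K vh r a mu n Psi S =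
     (\<Sum>i\<in>S. r i * (vh i / (1 + (\<Sum>j\<in>S. vh j)) + eps N Psi n i)
             - (\<Sum>k\<in>{1..K}. a i k * mu k * (vh i / (1 + (\<Sum>j\<in>S. vh j)) - eps N Psi n i)))"

definition optimalI ::
  "nat \<Rightarrow> nat \<Rightarrow> (nat \<Rightarrow> real) \<Rightarrow> (nat \<Rightarrow> real) \<Rightarrow> (nat \<Rightarrow> nat \<Rightarrow> real)
   \<Rightarrow> (nat \<Rightarrow> real) \<Rightarrow> (nat \<Rightarrow> nat) \<Rightarrow> real \<Rightarrow> nat set \<Rightarrow> bool" where
  "optimalI N K vh r a mu n Psi S \<longleftrightarrow>
     S \<subseteq> {1..N} \<and>
     (\<forall>T. T \<subseteq> {1..N} \<longrightarrow> objI N K vh r a mu n Psi T \<le> objI N K vh r a mu n Psi S)"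

definition objII ::
  "nat \<Rightarrow> nat \<Rightarrow> (nat \<Rightarrow> real) \<Rightarrow> (nat \<Rightarrow> real) \<Rightarrow> (nat \<Rightarrow> nat \<Rightarrow> real)
   \<Rightarrow> (nat \<Rightarrow> real) \<Rightarrow> (nat \<Rightarrow> nat) \<Rightarrow> real
   \<Rightarrow> real \<Rightarrow> (nat \<Rightarrow> real) \<Rightarrow> (nat \<Rightarrow> nat \<Rightarrow> real) \<Rightarrow> real" where
  "objII N K vh r a mu n Psi x0 x y =
     (\<Sum>i\<in>{1..N}.
        r i * ((vh i + eps N Psi n i) * x i + eps N Psi n i * (\<Sum>j\<in>{1..N}. vh j * y i j))
      - (\<Sum>k\<in>{1..K}. a i k * mu k *
           ((vh i - eps N Psi n i) * x i - eps N Psi n i * (\<Sum>j\<in>{1..N}. vh j * y i j))))"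

text \<open>Feasible region of Problem (II) (only coordinates indexed by {1..N} matter).\<close>
definition feasII ::
  "nat \<Rightarrow> (nat \<Rightarrow> real) \<Rightarrow> real \<Rightarrow> (nat \<Rightarrow> real) \<Rightarrow> (nat \<Rightarrow> nat \<Rightarrow> real) \<Rightarrow> bool" where
  "feasII N vh x0 x y \<longleftrightarrow>
     x0 + (\<Sum>i\<in>{1..N}. vh i * x i) = 1 \<and>
     (\<forall>i\<in>{1..N}. 0 \<le> x i \<and> x i \<le> x0) \<and>
     (\<forall>i\<in>{1..N}. \<forall>j\<in>{1..N}. 0 \<le> y i j \<and> y i j \<le> x i \<and> y i j \<le> x j)"

text \<open>Basic solution of Problem (II): a feasible point at which the active constraints
  have full rank, i.e. the only direction (d0, dx, dy) in the variable space
  R x R^N x R^(N x N) annihilated by all active constraints is zero.\<close>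
definition basicII ::
  "nat \<Rightarrow> (nat \<Rightarrow> real) \<Rightarrow> real \<Rightarrow> (nat \<Rightarrow> real) \<Rightarrow> (nat \<Rightarrow> nat \<Rightarrow> real) \<Rightarrow> bool" where
  "basicII N vh x0 x y \<longleftrightarrow>
     feasII N vh x0 x y \<and>
     (\<forall>(d0::real) (dx::nat \<Rightarrow> real) (dy::nat \<Rightarrow> nat \<Rightarrow> real).
        d0 + (\<Sum>i\<in>{1..N}. vh i * dx i) = 0 \<and>
        (\<forall>i\<in>{1..N}. x i = 0 \<longrightarrow> dx i = 0) \<and>
        (\<forall>i\<in>{1..N}. x i = x0 \<longrightarrow> dx i = d0) \<and>
        (\<forall>i\<in>{1..N}. \<forall>j\<in>{1..N}. y i j = 0 \<longrightarrow> dy i j = 0) \<and>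
        (\<forall>i\<in>{1..N}. \<forall>j\<in>{1..N}. y i j = x i \<longrightarrow> dy i j = dx i) \<and>
        (\<forall>i\<in>{1..N}. \<forall>j\<in>{1..N}. y i j = x j \<longrightarrow> dy i j = dx j)
        \<longrightarrow> d0 = 0 \<and> (\<forall>i\<in>{1..N}. dx i = 0) \<and> (\<forall>i\<in>{1..N}. \<forall>j\<in>{1..N}. dy i j = 0))"

definition optimalII ::
  "nat \<Rightarrow> nat \<Rightarrow> (nat \<Rightarrow> real) \<Rightarrow> (nat \<Rightarrow> real) \<Rightarrow> (nat \<Rightarrow> nat \<Rightarrow> real)
   \<Rightarrow> (nat \<Rightarrow> real) \<Rightarrow> (nat \<Rightarrow> nat) \<Rightarrow> real
   \<Rightarrow> real \<Rightarrow> (nat \<Rightarrow> real) \<Rightarrow> (nat \<Rightarrow> nat \<Rightarrow> real) \<Rightarrow> bool" where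
  "optimalII N K vh r a mu n Psi x0 x y \<longleftrightarrow>
     feasII N vh x0 x y \<and>
     (\<forall>x0' x' y'. feasII N vh x0' x' y' \<longrightarrow>
        objII N K vh r a mu n Psi x0' x' y' \<le> objII N K vh r a mu n Psi x0 x y)"

end

theory Submission
  imports Defs
begin

(* An assortment T is represented in Problem (II) by the feasible point with
   x0 = 1 / (1 + sum of vh over T), x = x0 on T and y = x0 on T x T, where the two
   objectives agree; so the optimal value of (II) bounds every value of (I).
   Conversely, at a basic feasible point each x i equals 0 or x0, since any other
   level could be perturbed along a direction keeping all active constraints tight.
   Then feasibility forces y \<le> x0 on S x S and y = 0 elsewhere, S being the support
   of x, and as the objective of (II) is nondecreasing in y, its value at the basic
   optimum is at most the value of (I) at S. *)

lemma eps_nonneg: "Psi \<ge> 0 \<Longrightarrow> eps N Psi n i \<ge> 0"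
  unfolding eps_def by simp

lemma sum_mult_indicator:
  fixes v :: "'a \<Rightarrow> 'b::comm_semiring_1"
  assumes "finite A" and "T \<subseteq> A"
  shows "(\<Sum>j\<in>A. v j * (if j \<in> T then c else 0)) = c * sum v T"
proof -
  have "(\<Sum>j\<in>A. v j * (if j \<in> T then c else 0)) = (\<Sum>j\<in>A. if j \<in> T then c * v j else 0)"
    by (rule sum.cong) (simp_all add: mult.commute)
  also have "\<dots> = (\<Sum>j\<in>T. c * v j)"
    using assms by (simp add: sum.inter_restrict[symmetric] Int_absorb1 Int_absorb2)
  finally show ?thesis by (simp add: sum_distrib_left)
qed

lemma feasII_x0_pos:
  assumes feas: "feasII N vh x0 x y"
  shows "x0 > 0"
proof (rule ccontr)
  assume "\<not> x0 > 0"
  then have "\<forall>i\<in>{1..N}. x i = 0" using feas unfolding feasII_def by force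
  then have "x0 = 1" using feas unfolding feasII_def by simp
  with \<open>\<not> x0 > 0\<close> show False by simp
qed

lemma basicII_two_valued:
  assumes vh_nonneg: "\<forall>i\<in>{1..N}. vh i \<ge> 0"
    and basic: "basicII N vh x0 x y"
    and i0: "i0 \<in> {1..N}"
  shows "x i0 = 0 \<or> x i0 = x0"
proof (rule ccontr)
  define \<alpha> where "\<alpha> = x i0"
  assume "\<not> (x i0 = 0 \<or> x i0 = x0)"
  then have \<alpha>: "\<alpha> \<noteq> 0" "\<alpha> \<noteq> x0" unfolding \<alpha>_def by auto
  have x0_pos: "x0 > 0"
    using basic feasII_x0_pos unfolding basicII_def by blast
  \<comment> \<open>Move x0 by \<delta> and every variable, x i or y i j, by g of its current value: variables
      that coincide stay equal, zeros stay zero, and \<delta> restores the budget constraint.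
      So this direction respects all active constraints, yet it is 1 at x i0.\<close>
  define A where "A = (\<Sum>i\<in>{1..N}. vh i * (if x i = \<alpha> then 1 else 0))"
  define B where "B = (\<Sum>i\<in>{1..N}. vh i * (if x i = x0 then 1 else 0))"
  define \<delta> where "\<delta> = - A / (1 + B)"
  define g where "g v = (if v = \<alpha> then 1 else 0) + \<delta> * (if v = x0 then 1 else 0)" for v :: real
  have "B \<ge> 0"
    unfolding B_def using vh_nonneg by (intro sum_nonneg) simp
  then have "\<delta> * (1 + B) = - A"
    unfolding \<delta>_def by simp
  moreover have "(\<Sum>i\<in>{1..N}. vh i * g (x i)) = A + \<delta> * B"
    unfolding A_def B_def g_def by (simp add: sum.distrib sum_distrib_left algebra_simps)
  ultimately have budget: "\<delta> + (\<Sum>i\<in>{1..N}. vh i * g (x i)) = 0"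
    by (simp add: algebra_simps)
  have g_0: "g 0 = 0" and g_x0: "g x0 = \<delta>" and g_\<alpha>: "g \<alpha> = 1"
    using \<alpha> x0_pos unfolding g_def by auto
  have "\<forall>i\<in>{1..N}. g (x i) = 0"
    using basic[unfolded basicII_def, THEN conjunct2, rule_format,
        of \<delta> "\<lambda>i. g (x i)" "\<lambda>i j. g (y i j)"] budget g_0 g_x0
    by auto
  with i0 g_\<alpha> show False
    unfolding \<alpha>_def by auto
qed

lemma objII_assortment:
  assumes T: "T \<subseteq> {1..N}"
    and c: "c * (1 + sum vh T) = 1"
    and x: "\<forall>i\<in>{1..N}. x i = (if i \<in> T then c else 0)"
  shows "objII N K vh r a mu n Psi c x (\<lambda>i j. if i \<in> T \<and> j \<in> T then c else 0)
       = objI N K vh r a mu n Psi T"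
proof -
  let ?V = "sum vh T"
  have share: "vh i / (1 + ?V) = vh i * c" for i
  proof -
    have "vh i = vh i * c * (1 + ?V)" and "1 + ?V \<noteq> 0"
      using c by (auto simp: mult.assoc)
    then show ?thesis
      by (simp add: divide_eq_eq)
  qed
  have plus: "(v + e) * c + e * (c * ?V) = v * c + e"
    and minus: "(v - e) * c - e * (c * ?V) = v * c - e" for v e :: real
    using c by algebra+
  have row: "(\<Sum>j\<in>{1..N}. vh j * (if i \<in> T \<and> j \<in> T then c else 0))
      = (if i \<in> T then c * ?V else 0)" for i
    using sum_mult_indicator[OF _ T, of vh c] by simp
  define f where "f i = r i * (vh i / (1 + ?V) + eps N Psi n i)
      - (\<Sum>k\<in>{1..K}. a i k * mu k * (vh i / (1 + ?V) - eps N Psi n i))" for i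
  have "objII N K vh r a mu n Psi c x (\<lambda>i j. if i \<in> T \<and> j \<in> T then c else 0)
      = (\<Sum>i\<in>{1..N}. if i \<in> T then f i else 0)"
    unfolding objII_def row
    by (rule sum.cong) (use x in \<open>auto simp: plus minus share f_def\<close>)
  also have "\<dots> = sum f T"
    using T by (simp add: sum.inter_restrict[symmetric] Int_absorb1)
  finally show ?thesis
    unfolding objI_def f_def .
qed

lemma feasII_assortment:
  assumes T: "T \<subseteq> {1..N}"
    and c: "c * (1 + sum vh T) = 1" "c \<ge> 0"
  shows "feasII N vh c (\<lambda>i. if i \<in> T then c else 0) (\<lambda>i j. if i \<in> T \<and> j \<in> T then c else 0)"
proof -
  have "(\<Sum>i\<in>{1..N}. vh i * (if i \<in> T then c else 0)) = c * sum vh T"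
    by (rule sum_mult_indicator[OF _ T]) simp
  then show ?thesis
    unfolding feasII_def using c by (simp add: algebra_simps)
qed

lemma objII_mono_y:
  assumes vh_nonneg: "\<forall>i\<in>{1..N}. vh i \<ge> 0"
    and r_nonneg: "\<forall>i\<in>{1..N}. r i \<ge> 0"
    and a_nonneg: "\<forall>i\<in>{1..N}. \<forall>k\<in>{1..K}. a i k \<ge> 0"
    and mu_nonneg: "\<forall>k\<in>{1..K}. mu k \<ge> 0"
    and Psi_nonneg: "Psi \<ge> 0"
    and y_le: "\<forall>i\<in>{1..N}. \<forall>j\<in>{1..N}. y i j \<le> y' i j"
  shows "objII N K vh r a mu n Psi x0 x y \<le> objII N K vh r a mu n Psi x0 x y'"
  unfolding objII_def
proof (rule sum_mono)
  fix i assume i: "i \<in> {1..N}"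
  define e where "e = eps N Psi n i"
  define Y where "Y = (\<Sum>j\<in>{1..N}. vh j * y i j)"
  define Y' where "Y' = (\<Sum>j\<in>{1..N}. vh j * y' i j)"
  have "Y \<le> Y'"
    unfolding Y_def Y'_def using vh_nonneg y_le i by (intro sum_mono mult_left_mono) auto
  moreover have "e \<ge> 0"
    unfolding e_def using Psi_nonneg by (rule eps_nonneg)
  ultimately have "e * Y \<le> e * Y'"
    by (rule mult_left_mono)
  then have "r i * ((vh i + e) * x i + e * Y) \<le> r i * ((vh i + e) * x i + e * Y')"
    and "(\<Sum>k\<in>{1..K}. a i k * mu k * ((vh i - e) * x i - e * Y'))
      \<le> (\<Sum>k\<in>{1..K}. a i k * mu k * ((vh i - e) * x i - e * Y))"
    using r_nonneg a_nonneg mu_nonneg i by (auto intro!: mult_left_mono sum_mono)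
  then show "r i * ((vh i + e) * x i + e * Y) - (\<Sum>k\<in>{1..K}. a i k * mu k * ((vh i - e) * x i - e * Y))
      \<le> r i * ((vh i + e) * x i + e * Y') - (\<Sum>k\<in>{1..K}. a i k * mu k * ((vh i - e) * x i - e * Y'))"
    by linarith
qed

lemma objI_le_optimalII:
  assumes vh_nonneg: "\<forall>i\<in>{1..N}. vh i \<ge> 0"
    and opt: "optimalII N K vh r a mu n Psi x0 x y"
    and T: "T \<subseteq> {1..N}"
  shows "objI N K vh r a mu n Psi T \<le> objII N K vh r a mu n Psi x0 x y"
proof -
  define c where "c = 1 / (1 + sum vh T)"
  have "sum vh T \<ge> 0"
    using T vh_nonneg by (intro sum_nonneg) auto
  then have c: "c * (1 + sum vh T) = 1" "c \<ge> 0"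
    unfolding c_def by simp_all
  have "objI N K vh r a mu n Psi T
      = objII N K vh r a mu n Psi c (\<lambda>i. if i \<in> T then c else 0)
          (\<lambda>i j. if i \<in> T \<and> j \<in> T then c else 0)"
    by (rule objII_assortment[OF T c(1), symmetric]) simp
  also have "\<dots> \<le> objII N K vh r a mu n Psi x0 x y"
    using opt feasII_assortment[OF T c] unfolding optimalII_def by blast
  finally show ?thesis .
qed

lemma basicII_objII_le_objI:
  assumes vh_nonneg: "\<forall>i\<in>{1..N}. vh i \<ge> 0"
    and r_nonneg: "\<forall>i\<in>{1..N}. r i \<ge> 0"
    and a_nonneg: "\<forall>i\<in>{1..N}. \<forall>k\<in>{1..K}. a i k \<ge> 0"
    and mu_nonneg: "\<forall>k\<in>{1..K}. mu k \<ge> 0"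
    and Psi_nonneg: "Psi \<ge> 0"
    and basic: "basicII N vh x0 x y"
  shows "objII N K vh r a mu n Psi x0 x y \<le> objI N K vh r a mu n Psi {i \<in> {1..N}. x i \<noteq> 0}"
proof -
  define S where "S = {i \<in> {1..N}. x i \<noteq> 0}"
  have S: "S \<subseteq> {1..N}"
    unfolding S_def by auto
  have feas: "feasII N vh x0 x y"
    using basic unfolding basicII_def by simp
  have x: "\<forall>i\<in>{1..N}. x i = (if i \<in> S then x0 else 0)"
    using basicII_two_valued[OF vh_nonneg basic] unfolding S_def by force
  then have "(\<Sum>i\<in>{1..N}. vh i * x i) = x0 * sum vh S"
    using sum_mult_indicator[OF _ S, of vh x0] by simp
  then have c: "x0 * (1 + sum vh S) = 1"
    using feas unfolding feasII_def by (simp add: algebra_simps)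
  have "\<forall>i\<in>{1..N}. \<forall>j\<in>{1..N}. y i j \<le> (if i \<in> S \<and> j \<in> S then x0 else 0)"
  proof (intro ballI)
    fix i j assume "i \<in> {1..N}" and "j \<in> {1..N}"
    then have "y i j \<le> x i" and "y i j \<le> x j"
      using feas unfolding feasII_def by auto
    with x \<open>i \<in> {1..N}\<close> \<open>j \<in> {1..N}\<close>
    show "y i j \<le> (if i \<in> S \<and> j \<in> S then x0 else 0)"
      by auto
  qed
  then have "objII N K vh r a mu n Psi x0 x y
      \<le> objII N K vh r a mu n Psi x0 x (\<lambda>i j. if i \<in> S \<and> j \<in> S then x0 else 0)"
    by (intro objII_mono_y vh_nonneg r_nonneg a_nonneg mu_nonneg Psi_nonneg)
  also have "\<dots> = objI N K vh r a mu n Psi S"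
    by (rule objII_assortment[OF S c x])
  finally show ?thesis
    unfolding S_def .
qed

theorem theoremC1:
  fixes N K :: nat and vh r :: "nat \<Rightarrow> real" and a :: "nat \<Rightarrow> nat \<Rightarrow> real"
    and mu :: "nat \<Rightarrow> real" and n :: "nat \<Rightarrow> nat" and Psi :: real
    and x0 :: real and x :: "nat \<Rightarrow> real" and y :: "nat \<Rightarrow> nat \<Rightarrow> real"
  assumes vh_pos: "\<forall>i\<in>{1..N}. vh i > 0"
    and r_range: "\<forall>i\<in>{1..N}. 0 \<le> r i \<and> r i \<le> 1"
    and a_range: "\<forall>i\<in>{1..N}. \<forall>k\<in>{1..K}. 0 \<le> a i k \<and> a i k \<le> 1"
    and mu_nonneg: "\<forall>k\<in>{1..K}. mu k \<ge> 0"
    and n_pos: "\<forall>i\<in>{1..N}. n i > 0"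
    and Psi_pos: "Psi > 0"
    and basic: "basicII N vh x0 x y"
    and opt: "optimalII N K vh r a mu n Psi x0 x y"
  shows "optimalI N K vh r a mu n Psi {i \<in> {1..N}. x i \<noteq> 0}"
proof -
  have vh_nonneg: "\<forall>i\<in>{1..N}. vh i \<ge> 0"
    using vh_pos by (simp add: less_imp_le)
  have r_nonneg: "\<forall>i\<in>{1..N}. r i \<ge> 0" and a_nonneg: "\<forall>i\<in>{1..N}. \<forall>k\<in>{1..K}. a i k \<ge> 0"
    using r_range a_range by simp_all
  have "objI N K vh r a mu n Psi T \<le> objI N K vh r a mu n Psi {i \<in> {1..N}. x i \<noteq> 0}"
    if T: "T \<subseteq> {1..N}" for T
  proof -
    have "objI N K vh r a mu n Psi T \<le> objII N K vh r a mu n Psi x0 x y"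
      by (rule objI_le_optimalII[OF vh_nonneg opt T])
    also have "\<dots> \<le> objI N K vh r a mu n Psi {i \<in> {1..N}. x i \<noteq> 0}"
      by (rule basicII_objII_le_objI[OF vh_nonneg r_nonneg a_nonneg mu_nonneg
            less_imp_le[OF Psi_pos] basic])
    finally show ?thesis .
  qed
  then show ?thesis
    unfolding optimalI_def by blast
qed

end
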